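(* Let $\tau:\mathscr{A}\to\mathbb{C}$ be a linear functional with $|\tau(q)|\le C_0^{\deg q}$ for all monomials $q$, and $A>1$ with $C_0/A<1/2$. Let $g\in\mathscr{A}_0^{(A)}$ with $\|g\|_A<A^2/2$ and set $$Q(\Sigma g)=\sum_{m\ge0}\frac{(-1)^m}{m+2}Q_{m+2}(\Sigma g).$$ Then this series converges in $\|\cdot\|_A$, and (with $\log(1+x)=-\sum_{m\ge1}(-x)^m/m$) $$Q(\Sigma g)=(1\otimes\tau+\tau\otimes1)\Big\{\sum_{i=1}^n(\mathscr{J}\mathscr{D}\Sigma g)_{ii}-\big(\log(1+\mathscr{J}\mathscr{D}\Sigma g)\big)_{ii}\Big\}.$$ Moreover, for $f,g$ in $\{h\in\mathscr{A}_0^{(A)}:\|h\|_A<A^2/2\}$, $$\|Q(\Sigma g)-Q(\Sigma f)\|_A\le\|f-g\|_A\frac{2}{A^2}\Big(\frac{1}{(1-\frac{2\|f\|_A}{A^2})(1-\frac{2\|g\|_A}{A^2})}-1\Big),$$ and $$\|Q(\Sigma g)\|_A\le\frac{(2\|g\|_A/A^2)^2}{1-2\|g\|_A/A^2}.$$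
   Context: $\mathscr{A}=\mathbb{C}\langle X_1,\dots,X_n\rangle$, $\mathscr{A}_0$ the span of monomials of degree $\ge1$; $\|P\|_A=\sum_q|\lambda_q(P)|A^{\deg q}$; $\mathscr{A}^{(A)},\mathscr{A}_0^{(A)}$ the completions. $\Sigma q=q/\deg q$ on monomials of degree $\ge1$, extended by continuity. $\partial_j$: derivation with $\partial_jX_i=\delta_{ij}1\otimes1$; $\mathscr{D}_jq=\sum_{q=BX_jC}CB$; $\mathscr{J}\mathscr{D}g=(\partial_j\mathscr{D}_ig)_{i,j}\in M_n(\mathscr{A}\otimes\mathscr{A}^{op})$, products using $(a\otimes b)(c\otimes d)=ac\otimes db$. $(1\otimes\tau+\tau\otimes1)(a\otimes b)=a\tau(b)+\tau(a)b$. $Q_m(g_1,\dots,g_m)=(1\otimes\tau+\tau\otimes1)\{\sum_i[(\mathscr{J}\mathscr{D}g_1)\cdots(\mathscr{J}\mathscr{D}g_m)]_{ii}\}$ for $g_k\in\mathscr{A}_0$, extended continuously, and $Q_m(\Sigma g)=Q_m(\Sigma g,\dots,\Sigma g)$. *)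

theory Defs
  imports "HOL-Analysis.Analysis"
begin

text \<open>Variables X_1..X_n are the elements of a finite type 'v. A monomial is a
word ('v list); its degree is its length. An element of the completion of the
algebra of noncommutative polynomials is represented by its coefficient function;
an element of the completion of A (x) A^op by its coefficient function on pairs of
monomials (coefficient of p (x) r); an element of M_n(A (x) A^op) by a 'v-indexed
matrix of such.\<close>

type_synonym 'v ser = "'v list \<Rightarrow> complex"
type_synonym 'v ten = "'v list \<times> 'v list \<Rightarrow> complex"
type_synonym 'v mat = "'v \<Rightarrow> 'v \<Rightarrow> 'v ten"

definition normA :: "real \<Rightarrow> 'v ser \<Rightarrow> real" where
  "normA A P = (\<Sum>\<^sub>\<infinity>w. cmod (P w) * A ^ length w)"

definition inCompl :: "real \<Rightarrow> 'v ser \<Rightarrow> bool" where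
  "inCompl A P \<longleftrightarrow> (\<lambda>w. cmod (P w) * A ^ length w) summable_on UNIV"

definition sigmaop :: "'v ser \<Rightarrow> 'v ser" where
  "sigmaop P w = (if w = [] then 0 else P w / of_nat (length w))"

text \<open>Cyclic derivative: D_j q = sum_{q = B X_j C} C B.  The coefficient of w = C B
comes from q = B X_j C, where C = take k w, B = drop k w.\<close>
definition cycD :: "'v \<Rightarrow> 'v ser \<Rightarrow> 'v ser" where
  "cycD j P w = (\<Sum>k\<le>length w. P (drop k w @ [j] @ take k w))"

text \<open>Free difference quotient: d_j q = sum_{q = B X_j C} B (x) C.\<close>
definition ncderiv :: "'v \<Rightarrow> 'v ser \<Rightarrow> 'v ten" where
  "ncderiv j P pr = P (fst pr @ [j] @ snd pr)"

definition JD :: "'v ser \<Rightarrow> 'v mat" where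
  "JD P i j = ncderiv j (cycD i P)"

text \<open>Product in A (x) A^op: (a (x) b)(c (x) d) = ac (x) db.\<close>
definition tmult :: "'v ten \<Rightarrow> 'v ten \<Rightarrow> 'v ten" where
  "tmult S T pr = (\<Sum>k\<le>length (fst pr). \<Sum>l\<le>length (snd pr).
      S (take k (fst pr), drop l (snd pr)) * T (drop k (fst pr), take l (snd pr)))"

definition mmult :: "('v::finite) mat \<Rightarrow> 'v mat \<Rightarrow> 'v mat" where
  "mmult M N i k = (\<lambda>pr. \<Sum>j\<in>UNIV. tmult (M i j) (N j k) pr)"

definition tunit :: "'v ten" where
  "tunit pr = (if fst pr = [] \<and> snd pr = [] then 1 else 0)"

definition mident :: "'v mat" where
  "mident i j = (if i = j then tunit else (\<lambda>_. 0))"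

fun mpow :: "('v::finite) mat \<Rightarrow> nat \<Rightarrow> 'v mat" where
  "mpow M 0 = mident"
| "mpow M (Suc m) = mmult (mpow M m) M"

definition mtrace :: "('v::finite) mat \<Rightarrow> 'v ten" where
  "mtrace M pr = (\<Sum>i\<in>UNIV. M i i pr)"

text \<open>(1 (x) tau + tau (x) 1)(a (x) b) = a tau(b) + tau(a) b, applied to the
(absolutely convergent) expansion in the monomial basis, i.e. the continuous
extension of the map.  tau is given by its values on monomials.\<close>
definition trmap :: "'v ser \<Rightarrow> 'v ten \<Rightarrow> 'v ser" where
  "trmap tau T w = (\<Sum>\<^sub>\<infinity>q. T (w, q) * tau q) + (\<Sum>\<^sub>\<infinity>p. T (p, w) * tau p)"

definition Qm :: "'v ser \<Rightarrow> ('v::finite) ser \<Rightarrow> nat \<Rightarrow> 'v ser" where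
  "Qm tau g m = trmap tau (mtrace (mpow (JD (sigmaop g)) m))"

definition Qser :: "'v ser \<Rightarrow> ('v::finite) ser \<Rightarrow> 'v ser" where
  "Qser tau g w = (\<Sum>m. (-1) ^ m / (of_nat m + 2) * Qm tau g (m + 2) w)"

definition logp :: "('v::finite) mat \<Rightarrow> nat \<Rightarrow> 'v mat" where
  "logp M N i j pr = - (\<Sum>m\<in>{1..N}. (-1) ^ m / of_nat m * mpow M m i j pr)"

end

theory Submission
  imports Defs
begin

(* Everything is a majorant estimate in weighted l1-norms.  For weights
   a, b >= 0 an element T of A (x) A^op gets the norm
     ||T||_{a,b} = sum_{p,r} |T(p,r)| a^|p| b^|r|,
   which is submultiplicative for the product (a (x) b)(c (x) d) = ac (x) db; a matrix
   over A (x) A^op gets the sum of the norms of its entries, again submultiplicative.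
   Three estimates drive the proof, with rho(h) = 2 ||h||_A / A^2:
    (1) ||JD(Sigma h)||_{A,C0} and ||JD(Sigma h)||_{C0,A} are at most rho(h), because
        Sigma divides the coefficient of a monomial of degree d by d, which absorbs the
        d positions of the cyclic derivative, and C0 <= A/2 makes the geometric sums
        over the remaining positions at most 2 A^(d-2);
    (2) ||(1 (x) tau + tau (x) 1) T||_A <= ||T||_{A,C0} + ||T||_{C0,A}, as |tau q| <= C0^deg q;
    (3) the telescoping bound ||M^k - N^k|| <= ||M - N|| sum_j ||M||^j ||N||^(k-1-j).
   Hence the m-th term of Q(Sigma g) has norm <= rho(g)^(m+2); as rho(g) < 1 the series
   converges geometrically, which gives convergence and the norm bound, and (3) gives the
   Lipschitz bound.  The logarithm formula is the identity of the partial sums. *)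

section \<open>Sums of nonnegative families\<close>

lemma summable_on_bounded_sums:
  fixes f :: "'a \<Rightarrow> real"
  assumes nn: "\<And>x. 0 \<le> f x" and bound: "\<And>F. finite F \<Longrightarrow> sum f F \<le> B"
  shows "f summable_on UNIV \<and> infsum f UNIV \<le> B"
proof -
  have s: "f summable_on UNIV"
    by (rule nonneg_bdd_above_summable_on) (use nn bound in \<open>auto intro!: bdd_aboveI2\<close>)
  moreover have "infsum f UNIV \<le> B" by (rule infsum_le_finite_sums[OF s]) (use bound in auto)
  ultimately show ?thesis by simp
qed

lemma sum_le_infsum_nonneg:
  fixes f :: "'a \<Rightarrow> real"
  assumes "f summable_on UNIV" "\<And>x. 0 \<le> f x" "finite F"
  shows "sum f F \<le> infsum f UNIV"
  using finite_sum_le_infsum[OF assms(1) assms(3)] assms(2) by auto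

lemma infsum_finite_sum:
  fixes f :: "'i \<Rightarrow> 'a \<Rightarrow> 'b::{topological_comm_monoid_add, t2_space}"
  assumes "finite I" "\<And>i. i \<in> I \<Longrightarrow> f i summable_on UNIV"
  shows "(\<lambda>x. \<Sum>i\<in>I. f i x) summable_on UNIV
    \<and> infsum (\<lambda>x. \<Sum>i\<in>I. f i x) UNIV = (\<Sum>i\<in>I. infsum (f i) UNIV)"
  using assms
proof (induction I rule: finite_induct)
  case empty then show ?case by simp
next
  case (insert i I)
  then have s: "f i summable_on UNIV" "(\<lambda>x. \<Sum>i\<in>I. f i x) summable_on UNIV" by auto
  show ?case using insert summable_on_add[OF s] infsum_add[OF s] by simp
qed

lemma summable_on_slices:
  fixes f :: "'a \<times> 'a \<Rightarrow> real"
  assumes "f summable_on UNIV"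
  shows "(\<lambda>q. f (w, q)) summable_on UNIV" "(\<lambda>p. f (p, w)) summable_on UNIV"
proof -
  have "f summable_on (Pair w ` UNIV)" by (rule summable_on_subset_banach[OF assms]) auto
  then show "(\<lambda>q. f (w, q)) summable_on UNIV"
    using summable_on_reindex[of "Pair w" UNIV f] by (simp add: inj_on_def o_def)
  have "f summable_on ((\<lambda>p. (p, w)) ` UNIV)" by (rule summable_on_subset_banach[OF assms]) auto
  then show "(\<lambda>p. f (p, w)) summable_on UNIV"
    using summable_on_reindex[of "\<lambda>p. (p, w)" UNIV f] by (simp add: inj_on_def o_def)
qed

lemma sum_of_slices_le:
  fixes F :: "'a \<times> 'a \<Rightarrow> real"
  assumes s: "F summable_on UNIV" and nn: "\<And>x. 0 \<le> F x" and fW: "finite W"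
  shows "(\<Sum>w\<in>W. \<Sum>\<^sub>\<infinity>q. F (w, q)) \<le> infsum F UNIV"
    "(\<Sum>w\<in>W. \<Sum>\<^sub>\<infinity>p. F (p, w)) \<le> infsum F UNIV"
proof -
  have rows: "(\<lambda>q. \<Sum>w\<in>W. F (w, q)) summable_on UNIV
      \<and> (\<Sum>w\<in>W. \<Sum>\<^sub>\<infinity>q. F (w, q)) = (\<Sum>\<^sub>\<infinity>q. \<Sum>w\<in>W. F (w, q))"
    using infsum_finite_sum[of W "\<lambda>w q. F (w, q)"] fW summable_on_slices[OF s] by simp
  have "(\<Sum>\<^sub>\<infinity>q. \<Sum>w\<in>W. F (w, q)) \<le> infsum F UNIV"
  proof (rule infsum_le_finite_sums)
    fix Q :: "'a set" assume "finite Q"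
    have "(\<Sum>q\<in>Q. \<Sum>w\<in>W. F (w, q)) = (\<Sum>z\<in>W \<times> Q. F z)"
      by (subst sum.swap) (simp add: sum.cartesian_product)
    also have "\<dots> \<le> infsum F UNIV" by (rule sum_le_infsum_nonneg) (use s nn fW \<open>finite Q\<close> in auto)
    finally show "(\<Sum>q\<in>Q. \<Sum>w\<in>W. F (w, q)) \<le> infsum F UNIV" .
  qed (use rows in blast)
  then show "(\<Sum>w\<in>W. \<Sum>\<^sub>\<infinity>q. F (w, q)) \<le> infsum F UNIV" using rows by simp
  have cols: "(\<lambda>p. \<Sum>w\<in>W. F (p, w)) summable_on UNIV
      \<and> (\<Sum>w\<in>W. \<Sum>\<^sub>\<infinity>p. F (p, w)) = (\<Sum>\<^sub>\<infinity>p. \<Sum>w\<in>W. F (p, w))"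
    using infsum_finite_sum[of W "\<lambda>w p. F (p, w)"] fW summable_on_slices[OF s] by simp
  have "(\<Sum>\<^sub>\<infinity>p. \<Sum>w\<in>W. F (p, w)) \<le> infsum F UNIV"
  proof (rule infsum_le_finite_sums)
    fix Q :: "'a set" assume "finite Q"
    have "(\<Sum>p\<in>Q. \<Sum>w\<in>W. F (p, w)) = (\<Sum>z\<in>Q \<times> W. F z)"
      by (simp add: sum.cartesian_product)
    also have "\<dots> \<le> infsum F UNIV" by (rule sum_le_infsum_nonneg) (use s nn fW \<open>finite Q\<close> in auto)
    finally show "(\<Sum>p\<in>Q. \<Sum>w\<in>W. F (p, w)) \<le> infsum F UNIV" .
  qed (use cols in blast)
  then show "(\<Sum>w\<in>W. \<Sum>\<^sub>\<infinity>p. F (p, w)) \<le> infsum F UNIV" using cols by simp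
qed

section \<open>Weighted norms on the tensor product\<close>

definition tweight :: "real \<Rightarrow> real \<Rightarrow> 'v list \<times> 'v list \<Rightarrow> real" where
  "tweight a b pr = a ^ length (fst pr) * b ^ length (snd pr)"

definition tsummable :: "real \<Rightarrow> real \<Rightarrow> 'v ten \<Rightarrow> bool" where
  "tsummable a b T \<longleftrightarrow> (\<lambda>x. cmod (T x) * tweight a b x) summable_on UNIV"

definition tnorm :: "real \<Rightarrow> real \<Rightarrow> 'v ten \<Rightarrow> real" where
  "tnorm a b T = (\<Sum>\<^sub>\<infinity>x. cmod (T x) * tweight a b x)"

context
  fixes a b :: real
  assumes a0: "0 \<le> a" and b0: "0 \<le> b"
begin

lemma tweight_nonneg: "0 \<le> tweight a b x"
  using a0 b0 by (simp add: tweight_def)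

lemma tnorm_nonneg: "0 \<le> tnorm a b T"
  unfolding tnorm_def by (rule infsum_nonneg) (simp add: tweight_nonneg)

lemma tsummable_bounded_sums:
  assumes "\<And>F. finite F \<Longrightarrow> (\<Sum>x\<in>F. cmod (T x) * tweight a b x) \<le> B"
  shows "tsummable a b T \<and> tnorm a b T \<le> B"
proof -
  have "(\<lambda>x. cmod (T x) * tweight a b x) summable_on UNIV
      \<and> (\<Sum>\<^sub>\<infinity>x. cmod (T x) * tweight a b x) \<le> B"
    by (rule summable_on_bounded_sums) (use assms in \<open>auto simp: tweight_nonneg\<close>)
  then show ?thesis by (simp add: tsummable_def tnorm_def)
qed

lemma sum_le_tnorm:
  assumes "tsummable a b T" "finite F"
  shows "(\<Sum>x\<in>F. cmod (T x) * tweight a b x) \<le> tnorm a b T"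
  unfolding tnorm_def
  by (rule sum_le_infsum_nonneg) (use assms in \<open>auto simp: tsummable_def tweight_nonneg\<close>)

lemma tnorm_dominated:
  fixes U :: "'v ten" and T :: "'i \<Rightarrow> 'v ten"
  assumes fI: "finite I" and c: "\<And>i. i \<in> I \<Longrightarrow> 0 \<le> c i"
    and T: "\<And>i. i \<in> I \<Longrightarrow> tsummable a b (T i)"
    and le: "\<And>x. cmod (U x) \<le> (\<Sum>i\<in>I. c i * cmod (T i x))"
  shows "tsummable a b U \<and> tnorm a b U \<le> (\<Sum>i\<in>I. c i * tnorm a b (T i))"
proof (rule tsummable_bounded_sums)
  fix F :: "('v list \<times> 'v list) set" assume fF: "finite F"
  have "(\<Sum>x\<in>F. cmod (U x) * tweight a b x)
      \<le> (\<Sum>x\<in>F. (\<Sum>i\<in>I. c i * cmod (T i x)) * tweight a b x)"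
    by (intro sum_mono mult_right_mono le tweight_nonneg)
  also have "\<dots> = (\<Sum>x\<in>F. \<Sum>i\<in>I. c i * (cmod (T i x) * tweight a b x))"
    by (simp add: sum_distrib_right mult.assoc)
  also have "\<dots> = (\<Sum>i\<in>I. c i * (\<Sum>x\<in>F. cmod (T i x) * tweight a b x))"
    by (subst sum.swap) (simp add: sum_distrib_left)
  also have "\<dots> \<le> (\<Sum>i\<in>I. c i * tnorm a b (T i))"
    by (intro sum_mono mult_left_mono sum_le_tnorm T fF c)
  finally show "(\<Sum>x\<in>F. cmod (U x) * tweight a b x) \<le> (\<Sum>i\<in>I. c i * tnorm a b (T i))" .
qed

lemma tnorm_add_le:
  assumes "tsummable a b S" "tsummable a b T"
  shows "tsummable a b (\<lambda>x. S x + T x) \<and> tnorm a b (\<lambda>x. S x + T x) \<le> tnorm a b S + tnorm a b T"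
proof -
  have "tsummable a b (\<lambda>x. S x + T x) \<and> tnorm a b (\<lambda>x. S x + T x)
      \<le> (\<Sum>i\<in>{True, False}. 1 * tnorm a b (if i then S else T))"
    by (rule tnorm_dominated) (use assms in \<open>auto simp: norm_triangle_ineq\<close>)
  then show ?thesis by simp
qed

lemma tnorm_sum_le:
  fixes T :: "'i \<Rightarrow> 'v ten"
  assumes "finite I" "\<And>i. i \<in> I \<Longrightarrow> tsummable a b (T i)"
  shows "tsummable a b (\<lambda>x. \<Sum>i\<in>I. T i x)
    \<and> tnorm a b (\<lambda>x. \<Sum>i\<in>I. T i x) \<le> (\<Sum>i\<in>I. tnorm a b (T i))"
proof -
  have "tsummable a b (\<lambda>x. \<Sum>i\<in>I. T i x) \<and> tnorm a b (\<lambda>x. \<Sum>i\<in>I. T i x)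
      \<le> (\<Sum>i\<in>I. 1 * tnorm a b (T i))"
    by (rule tnorm_dominated) (use assms in \<open>auto simp: norm_sum\<close>)
  then show ?thesis by simp
qed

end

text \<open>Splitting p (x) r into (take k p, drop l r) and (drop k p, take l r), as in the
  product of A (x) A^op, is injective and multiplicative for the weights.\<close>
definition tsplit :: "('v list \<times> 'v list) \<times> nat \<times> nat \<Rightarrow> ('v list \<times> 'v list) \<times> ('v list \<times> 'v list)"
  where "tsplit = (\<lambda>((p, r), k, l). ((take k p, drop l r), (drop k p, take l r)))"

lemma tsplit_inj: "inj_on tsplit (SIGMA pr:F. {..length (fst pr)} \<times> {..length (snd pr)})"
proof (rule inj_on_inverseI[where g = "\<lambda>((x1, x2), (y1, y2)). ((x1 @ y1, y2 @ x2), length x1, length y2)"])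
  fix z assume "z \<in> (SIGMA pr:F. {..length (fst pr)} \<times> {..length (snd pr)})"
  then obtain p r k l where "z = ((p, r), k, l)" "k \<le> length p" "l \<le> length r" by auto
  then show "(\<lambda>((x1, x2), (y1, y2)). ((x1 @ y1, y2 @ x2), length x1, length y2)) (tsplit z) = z"
    by (simp add: tsplit_def min_def)
qed

lemma tweight_tsplit:
  assumes "k \<le> length p" "l \<le> length r"
  shows "tweight a b (p, r) = tweight a b (fst (tsplit ((p, r), k, l))) * tweight a b (snd (tsplit ((p, r), k, l)))"
proof -
  have "tweight a b (fst (tsplit ((p, r), k, l))) * tweight a b (snd (tsplit ((p, r), k, l)))
      = (a ^ k * a ^ (length p - k)) * (b ^ (length r - l) * b ^ l)"
    using assms by (simp add: tweight_def tsplit_def min_def mult_ac)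
  also have "\<dots> = tweight a b (p, r)"
    using assms by (simp add: tweight_def flip: power_add)
  finally show ?thesis by simp
qed

text \<open>||S T||_{a,b} <= ||S||_{a,b} ||T||_{a,b}: every term of the product is a product of a
  term of S and a term of T, and distinct terms come from distinct pairs.\<close>
lemma tmult_tnorm_le:
  fixes S T :: "'v ten"
  assumes a0: "0 \<le> a" and b0: "0 \<le> b" and S: "tsummable a b S" and T: "tsummable a b T"
  shows "tsummable a b (tmult S T) \<and> tnorm a b (tmult S T) \<le> tnorm a b S * tnorm a b T"
proof (rule tsummable_bounded_sums[OF a0 b0])
  fix F :: "('v list \<times> 'v list) set" assume fF: "finite F"
  define D where "D = (SIGMA pr:F. {..length (fst pr)} \<times> {..length (snd pr)})"
  define f where "f = (\<lambda>(x, y). (cmod (S x) * tweight a b x) * (cmod (T y) * tweight a b y))"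
  have fD: "finite D" unfolding D_def using fF by auto
  have f_nn: "0 \<le> f y" for y by (cases y) (simp add: f_def tweight_nonneg[OF a0 b0])
  have entrywise: "cmod (tmult S T pr) * tweight a b pr
      \<le> (\<Sum>(k, l)\<in>{..length (fst pr)} \<times> {..length (snd pr)}. f (tsplit (pr, k, l)))" for pr
  proof -
    obtain p r where pr: "pr = (p, r)" by (cases pr)
    have "cmod (tmult S T pr) \<le> (\<Sum>k\<le>length p. \<Sum>l\<le>length r.
        cmod (S (take k p, drop l r)) * cmod (T (drop k p, take l r)))"
      unfolding tmult_def pr fst_conv snd_conv
      by (rule order.trans[OF norm_sum sum_mono], rule order.trans[OF norm_sum sum_mono])
         (simp add: norm_mult)
    then have "cmod (tmult S T pr) * tweight a b pr \<le> (\<Sum>k\<le>length p. \<Sum>l\<le>length r.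
        cmod (S (take k p, drop l r)) * cmod (T (drop k p, take l r))) * tweight a b pr"
      by (rule mult_right_mono) (rule tweight_nonneg[OF a0 b0])
    also have "\<dots> = (\<Sum>(k, l)\<in>{..length p} \<times> {..length r}. f (tsplit (pr, k, l)))"
      unfolding sum_distrib_right sum.cartesian_product[symmetric]
    proof (intro sum.cong refl)
      fix k l assume "k \<in> {..length p}" "l \<in> {..length r}"
      then show "cmod (S (take k p, drop l r)) * cmod (T (drop k p, take l r)) * tweight a b pr
          = f (tsplit (pr, k, l))"
        using tweight_tsplit[of k p l r a b] by (simp add: pr f_def tsplit_def algebra_simps)
    qed
    finally show ?thesis by (simp add: pr)
  qed
  have "(\<Sum>x\<in>F. cmod (tmult S T x) * tweight a b x)
      \<le> (\<Sum>pr\<in>F. \<Sum>(k, l)\<in>{..length (fst pr)} \<times> {..length (snd pr)}. f (tsplit (pr, k, l)))"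
    by (rule sum_mono) (rule entrywise)
  also have "\<dots> = (\<Sum>z\<in>D. f (tsplit z))"
    unfolding D_def using sum.Sigma[of F "\<lambda>pr. {..length (fst pr)} \<times> {..length (snd pr)}"
        "\<lambda>pr kl. f (tsplit (pr, kl))"] fF by (simp add: split_def)
  also have "\<dots> = (\<Sum>y\<in>tsplit ` D. f y)"
    using sum.reindex[OF tsplit_inj, of f F] by (simp add: D_def)
  also have "\<dots> \<le> (\<Sum>y\<in>(fst ` tsplit ` D) \<times> (snd ` tsplit ` D). f y)"
  proof (rule sum_mono2)
    show "tsplit ` D \<subseteq> fst ` tsplit ` D \<times> snd ` tsplit ` D"
    proof
      fix y assume "y \<in> tsplit ` D"
      then show "y \<in> fst ` tsplit ` D \<times> snd ` tsplit ` D"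
        using imageI[of y "tsplit ` D" fst] imageI[of y "tsplit ` D" snd] by (simp add: mem_Times_iff)
    qed
  qed (use fD f_nn in auto)
  also have "\<dots> = (\<Sum>x\<in>fst ` tsplit ` D. cmod (S x) * tweight a b x)
      * (\<Sum>y\<in>snd ` tsplit ` D. cmod (T y) * tweight a b y)"
    unfolding f_def sum_product sum.cartesian_product by simp
  also have "\<dots> \<le> tnorm a b S * tnorm a b T"
    by (rule mult_mono)
       (use fD S T in \<open>auto intro!: sum_le_tnorm[OF a0 b0] sum_nonneg
          simp: tweight_nonneg[OF a0 b0] tnorm_nonneg[OF a0 b0]\<close>)
  finally show "(\<Sum>x\<in>F. cmod (tmult S T x) * tweight a b x) \<le> tnorm a b S * tnorm a b T" .
qed

lemma tmult_tunit: "tmult tunit T = (T :: 'v ten)"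
proof
  fix pr :: "'v list \<times> 'v list"
  obtain p r where pr: "pr = (p, r)" by (cases pr)
  have "tmult tunit T pr = (\<Sum>k\<le>length p. \<Sum>l\<le>length r.
       (if k = 0 then (if l = length r then T (p, r) else 0) else 0))"
    unfolding tmult_def pr tunit_def by (intro sum.cong refl) auto
  also have "\<dots> = (\<Sum>k\<le>length p. if k = 0 then T (p, r) else 0)"
    by (intro sum.cong refl) simp
  also have "\<dots> = T pr" by (simp add: pr)
  finally show "tmult tunit T pr = T pr" .
qed

lemma tmult_zero_left: "tmult (\<lambda>_. 0) T x = 0"
  unfolding tmult_def by simp

lemma tmult_diff_left: "tmult (\<lambda>x. S x - S' x) T x = tmult S T x - tmult S' T x"
  unfolding tmult_def by (simp add: sum_subtractf left_diff_distrib)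

lemma tmult_diff_right: "tmult S (\<lambda>x. T x - T' x) x = tmult S T x - tmult S T' x"
  unfolding tmult_def by (simp add: sum_subtractf right_diff_distrib)


section \<open>Weighted norms of matrices over the tensor product\<close>

definition msummable :: "real \<Rightarrow> real \<Rightarrow> ('v::finite) mat \<Rightarrow> bool" where
  "msummable a b M \<longleftrightarrow> (\<forall>i j. tsummable a b (M i j))"

definition mnorm :: "real \<Rightarrow> real \<Rightarrow> ('v::finite) mat \<Rightarrow> real" where
  "mnorm a b M = (\<Sum>i\<in>UNIV. \<Sum>j\<in>UNIV. tnorm a b (M i j))"

definition mdiff :: "'v mat \<Rightarrow> 'v mat \<Rightarrow> 'v mat" where
  "mdiff M N = (\<lambda>i j x. M i j x - N i j x)"

lemma mmult_mident: "mmult mident M = (M :: ('v::finite) mat)"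
proof (intro ext)
  fix i k pr
  have "mmult mident M i k pr = (\<Sum>j\<in>UNIV. if j = i then M i k pr else 0)"
    unfolding mmult_def mident_def by (intro sum.cong refl) (auto simp: tmult_tunit tmult_zero_left)
  then show "mmult mident M i k pr = M i k pr" by simp
qed

lemma mpow_1: "mpow M (Suc 0) = M"
  by (simp add: mmult_mident)

lemma mpow_diff_Suc:
  "mdiff (mpow M (Suc k)) (mpow N (Suc k)) i j x =
   mmult (mdiff (mpow M k) (mpow N k)) M i j x + mmult (mpow N k) (mdiff M N) i j x"
  unfolding mdiff_def
  by (simp add: mmult_def tmult_diff_left tmult_diff_right sum_subtractf flip: sum.distrib)

context
  fixes a b :: real
  assumes a0: "0 \<le> a" and b0: "0 \<le> b"
begin

lemma mnorm_nonneg: "0 \<le> mnorm a b M"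
  unfolding mnorm_def by (intro sum_nonneg tnorm_nonneg[OF a0 b0])

lemma mnorm_bounded_sums:
  fixes M :: "('v::finite) mat"
  assumes bound: "\<And>F. finite F \<Longrightarrow> (\<Sum>i\<in>UNIV. \<Sum>j\<in>UNIV. \<Sum>x\<in>F. cmod (M i j x) * tweight a b x) \<le> B"
  shows "msummable a b M \<and> mnorm a b M \<le> B"
proof -
  have nn: "0 \<le> cmod (M i j x) * tweight a b x" for i j x by (simp add: tweight_nonneg[OF a0 b0])
  have entry: "tsummable a b (M i j)" for i j
  proof -
    have "tsummable a b (M i j) \<and> tnorm a b (M i j) \<le> B"
    proof (rule tsummable_bounded_sums[OF a0 b0])
      fix F :: "('v list \<times> 'v list) set" assume "finite F"
      have "(\<Sum>x\<in>F. cmod (M i j x) * tweight a b x)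
          \<le> (\<Sum>j\<in>UNIV. \<Sum>x\<in>F. cmod (M i j x) * tweight a b x)"
        by (rule member_le_sum) (auto intro: sum_nonneg nn)
      also have "\<dots> \<le> (\<Sum>i\<in>UNIV. \<Sum>j\<in>UNIV. \<Sum>x\<in>F. cmod (M i j x) * tweight a b x)"
        by (rule member_le_sum) (auto intro!: sum_nonneg nn)
      also have "\<dots> \<le> B" using bound \<open>finite F\<close> .
      finally show "(\<Sum>x\<in>F. cmod (M i j x) * tweight a b x) \<le> B" .
    qed
    then show ?thesis by simp
  qed
  define G where "G x = (\<Sum>i\<in>UNIV. \<Sum>j\<in>UNIV. cmod (M i j x) * tweight a b x)" for x
  have G: "G summable_on UNIV \<and> infsum G UNIV \<le> B"
  proof (rule summable_on_bounded_sums)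
    show "0 \<le> G x" for x unfolding G_def by (intro sum_nonneg nn)
    fix F :: "('v list \<times> 'v list) set" assume "finite F"
    have "sum G F = (\<Sum>i\<in>UNIV. \<Sum>j\<in>UNIV. \<Sum>x\<in>F. cmod (M i j x) * tweight a b x)"
      unfolding G_def by (subst sum.swap, rule sum.cong[OF refl], rule sum.swap)
    then show "sum G F \<le> B" using bound \<open>finite F\<close> by simp
  qed
  have row: "(\<lambda>x. \<Sum>j\<in>UNIV. cmod (M i j x) * tweight a b x) summable_on UNIV
      \<and> (\<Sum>\<^sub>\<infinity>x. \<Sum>j\<in>UNIV. cmod (M i j x) * tweight a b x) = (\<Sum>j\<in>UNIV. tnorm a b (M i j))" for i
    unfolding tnorm_def by (rule infsum_finite_sum) (use entry in \<open>auto simp: tsummable_def\<close>)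
  have "infsum G UNIV = mnorm a b M"
    unfolding G_def mnorm_def using infsum_finite_sum[of UNIV "\<lambda>i x. \<Sum>j\<in>UNIV. cmod (M i j x) * tweight a b x"] row
    by simp
  then show ?thesis using entry G by (simp add: msummable_def)
qed

lemma mmult_mnorm_le:
  fixes M N :: "('v::finite) mat"
  assumes M: "msummable a b M" and N: "msummable a b N"
  shows "msummable a b (mmult M N) \<and> mnorm a b (mmult M N) \<le> mnorm a b M * mnorm a b N"
proof -
  have prod: "tsummable a b (tmult (M i j) (N j k))
      \<and> tnorm a b (tmult (M i j) (N j k)) \<le> tnorm a b (M i j) * tnorm a b (N j k)" for i j k
    using tmult_tnorm_le[OF a0 b0] M N unfolding msummable_def by blast
  have entry: "tsummable a b (mmult M N i k)
      \<and> tnorm a b (mmult M N i k) \<le> (\<Sum>j\<in>UNIV. tnorm a b (M i j) * tnorm a b (N j k))" for i k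
  proof -
    have "tsummable a b (mmult M N i k)
        \<and> tnorm a b (mmult M N i k) \<le> (\<Sum>j\<in>UNIV. tnorm a b (tmult (M i j) (N j k)))"
      unfolding mmult_def using tnorm_sum_le[OF a0 b0, of UNIV "\<lambda>j. tmult (M i j) (N j k)"] prod by simp
    moreover have "(\<Sum>j\<in>UNIV. tnorm a b (tmult (M i j) (N j k)))
        \<le> (\<Sum>j\<in>UNIV. tnorm a b (M i j) * tnorm a b (N j k))"
      by (intro sum_mono) (use prod in blast)
    ultimately show ?thesis by linarith
  qed
  have "mnorm a b (mmult M N) \<le> (\<Sum>i\<in>UNIV. \<Sum>k\<in>UNIV. \<Sum>j\<in>UNIV. tnorm a b (M i j) * tnorm a b (N j k))"
    unfolding mnorm_def by (intro sum_mono) (use entry in blast)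
  also have "\<dots> = (\<Sum>i\<in>UNIV. \<Sum>j\<in>UNIV. tnorm a b (M i j) * (\<Sum>k\<in>UNIV. tnorm a b (N j k)))"
    by (rule sum.cong[OF refl], subst sum.swap, simp add: sum_distrib_left)
  also have "\<dots> \<le> (\<Sum>i\<in>UNIV. \<Sum>j\<in>UNIV. tnorm a b (M i j) * mnorm a b N)"
  proof (intro sum_mono mult_left_mono tnorm_nonneg[OF a0 b0])
    fix j
    show "(\<Sum>k\<in>UNIV. tnorm a b (N j k)) \<le> mnorm a b N"
      unfolding mnorm_def by (rule member_le_sum) (auto intro: sum_nonneg tnorm_nonneg[OF a0 b0])
  qed
  also have "\<dots> = mnorm a b M * mnorm a b N" by (simp add: mnorm_def sum_distrib_right)
  finally show ?thesis using entry unfolding msummable_def by blast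
qed

lemma mpow_mnorm_le:
  assumes M: "msummable a b M"
  shows "msummable a b (mpow M (Suc m)) \<and> mnorm a b (mpow M (Suc m)) \<le> mnorm a b M ^ Suc m"
proof (induction m)
  case 0 then show ?case using M by (simp add: mmult_mident)
next
  case (Suc m)
  have "msummable a b (mpow M (Suc (Suc m)))
      \<and> mnorm a b (mpow M (Suc (Suc m))) \<le> mnorm a b (mpow M (Suc m)) * mnorm a b M"
    using mmult_mnorm_le[OF conjunct1[OF Suc] M] by simp
  moreover have "mnorm a b (mpow M (Suc m)) * mnorm a b M \<le> mnorm a b M ^ Suc m * mnorm a b M"
    by (intro mult_right_mono mnorm_nonneg) (use Suc in auto)
  ultimately show ?case by (simp add: mult.commute)
qed

lemma mtrace_tnorm_le:
  assumes M: "msummable a b M"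
  shows "tsummable a b (mtrace M) \<and> tnorm a b (mtrace M) \<le> mnorm a b M"
proof -
  have "tsummable a b (mtrace M) \<and> tnorm a b (mtrace M) \<le> (\<Sum>i\<in>UNIV. tnorm a b (M i i))"
    unfolding mtrace_def using tnorm_sum_le[OF a0 b0, of UNIV "\<lambda>i. M i i"] M by (simp add: msummable_def)
  moreover have "(\<Sum>i\<in>UNIV. tnorm a b (M i i)) \<le> mnorm a b M"
    unfolding mnorm_def by (intro sum_mono member_le_sum) (auto intro: tnorm_nonneg[OF a0 b0])
  ultimately show ?thesis by linarith
qed

lemma mnorm_add_le:
  fixes M N :: "('v::finite) mat"
  assumes "msummable a b M" "msummable a b N"
  shows "msummable a b (\<lambda>i j x. M i j x + N i j x)
    \<and> mnorm a b (\<lambda>i j x. M i j x + N i j x) \<le> mnorm a b M + mnorm a b N"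
proof -
  have entry: "tsummable a b (\<lambda>x. M i j x + N i j x)
      \<and> tnorm a b (\<lambda>x. M i j x + N i j x) \<le> tnorm a b (M i j) + tnorm a b (N i j)" for i j
    by (rule tnorm_add_le[OF a0 b0]) (use assms in \<open>auto simp: msummable_def\<close>)
  then have "mnorm a b (\<lambda>i j x. M i j x + N i j x)
      \<le> (\<Sum>i\<in>UNIV. \<Sum>j\<in>UNIV. tnorm a b (M i j) + tnorm a b (N i j))"
    unfolding mnorm_def by (intro sum_mono) auto
  also have "\<dots> = mnorm a b M + mnorm a b N" by (simp add: mnorm_def sum.distrib)
  finally show ?thesis using entry by (simp add: msummable_def)
qed

lemma mpow_diff_mnorm_le:
  fixes M N :: "('v::finite) mat"
  assumes M: "msummable a b M" and N: "msummable a b N" and D: "msummable a b (mdiff M N)"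
    and x: "mnorm a b M \<le> x" and y: "mnorm a b N \<le> y" and d: "mnorm a b (mdiff M N) \<le> \<delta>"
  shows "msummable a b (mdiff (mpow M (Suc k)) (mpow N (Suc k))) \<and>
    mnorm a b (mdiff (mpow M (Suc k)) (mpow N (Suc k))) \<le> \<delta> * (\<Sum>j\<le>k. x ^ j * y ^ (k - j))"
proof (induction k)
  case 0 then show ?case using D d by (simp add: mmult_mident)
next
  case (Suc k)
  define P where "P = mdiff (mpow M (Suc k)) (mpow N (Suc k))"
  have split: "mdiff (mpow M (Suc (Suc k))) (mpow N (Suc (Suc k))) =
     (\<lambda>i j x. mmult P M i j x + mmult (mpow N (Suc k)) (mdiff M N) i j x)"
    unfolding P_def by (intro ext) (rule mpow_diff_Suc)
  have PM: "msummable a b (mmult P M) \<and> mnorm a b (mmult P M) \<le> mnorm a b P * mnorm a b M"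
    by (rule mmult_mnorm_le) (use Suc M in \<open>auto simp: P_def\<close>)
  have Nk: "msummable a b (mpow N (Suc k)) \<and> mnorm a b (mpow N (Suc k)) \<le> mnorm a b N ^ Suc k"
    by (rule mpow_mnorm_le[OF N])
  have ND: "msummable a b (mmult (mpow N (Suc k)) (mdiff M N)) \<and>
      mnorm a b (mmult (mpow N (Suc k)) (mdiff M N)) \<le> mnorm a b (mpow N (Suc k)) * mnorm a b (mdiff M N)"
    by (rule mmult_mnorm_le) (use Nk D in auto)
  have sum: "msummable a b (mdiff (mpow M (Suc (Suc k))) (mpow N (Suc (Suc k))))
     \<and> mnorm a b (mdiff (mpow M (Suc (Suc k))) (mpow N (Suc (Suc k))))
       \<le> mnorm a b (mmult P M) + mnorm a b (mmult (mpow N (Suc k)) (mdiff M N))"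
    unfolding split by (rule mnorm_add_le) (use PM ND in auto)
  have nn: "0 \<le> mnorm a b P" "0 \<le> mnorm a b M" "0 \<le> mnorm a b N" "0 \<le> mnorm a b (mdiff M N)"
    "0 \<le> mnorm a b (mpow N (Suc k))"
    by (rule mnorm_nonneg)+
  have "mnorm a b (mmult P M) \<le> (\<delta> * (\<Sum>j\<le>k. x ^ j * y ^ (k - j))) * x"
    using PM Suc[folded P_def] x nn by (meson mult_mono order.trans)
  moreover have "mnorm a b (mmult (mpow N (Suc k)) (mdiff M N)) \<le> y ^ Suc k * \<delta>"
  proof -
    have "mnorm a b N ^ Suc k \<le> y ^ Suc k" by (rule power_mono[OF y nn(3)])
    then show ?thesis using ND Nk d nn by (meson mult_mono order.trans)
  qed
  ultimately have "mnorm a b (mdiff (mpow M (Suc (Suc k))) (mpow N (Suc (Suc k))))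
      \<le> \<delta> * (x * (\<Sum>j\<le>k. x ^ j * y ^ (k - j)) + y ^ Suc k)"
    using sum by (simp add: algebra_simps)
  also have "x * (\<Sum>j\<le>k. x ^ j * y ^ (k - j)) + y ^ Suc k = (\<Sum>j\<le>Suc k. x ^ j * y ^ (Suc k - j))"
    by (subst sum.atMost_Suc_shift) (simp add: sum_distrib_left mult.assoc)
  finally show ?case using sum by simp
qed

end

section \<open>Estimate (1): the Jacobian of the cyclic gradient\<close>

text \<open>The coefficient of p (x) r in the (i,j) entry of JD(Sigma g) collects the coefficients
  of g at the rotations u of the word p X_j r X_i.  We record such a contribution by the
  word u, the position s of the letter X_i in u, and the length t of p; the weight of
  p (x) r is then a^t b^(|u|-2-t).\<close>
definition cycsplit :: "('v list \<times> 'v list) \<times> 'v \<times> 'v \<times> nat \<Rightarrow> 'v list \<times> nat \<times> nat" where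
  "cycsplit = (\<lambda>((p, r), i, j, k).
     let w = p @ [j] @ r in (drop k w @ [i] @ take k w, length w - k, length p))"

definition cycweight :: "real \<Rightarrow> real \<Rightarrow> 'v ser \<Rightarrow> 'v list \<times> nat \<times> nat \<Rightarrow> real" where
  "cycweight a b g = (\<lambda>(u, s, t). cmod (g u) / real (length u) * a ^ t * b ^ (length u - 2 - t))"

lemma cycsplit_inj:
  "inj_on cycsplit (SIGMA x:F. (UNIV::'v set) \<times> (UNIV::'v set) \<times> {..length (fst x) + length (snd x) + 1})"
proof (rule inj_on_inverseI[where g = "\<lambda>(u, s, t). let w = drop (Suc s) u @ take s u
    in ((take t w, drop (Suc t) w), u ! s, w ! t, length w - s)"])
  fix z assume "z \<in> (SIGMA x:F. (UNIV::'v set) \<times> (UNIV::'v set) \<times> {..length (fst x) + length (snd x) + 1})"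
  then obtain p r i j k where z: "z = ((p, r), i, j, k)" "k \<le> length p + length r + 1" by auto
  define w where "w = p @ [j] @ r"
  have kw: "k \<le> length w" using z by (simp add: w_def)
  have split: "cycsplit z = (drop k w @ [i] @ take k w, length w - k, length p)"
    by (simp add: z cycsplit_def w_def)
  have rot: "drop (Suc (length w - k)) (drop k w @ [i] @ take k w)
      @ take (length w - k) (drop k w @ [i] @ take k w) = w"
    using kw by simp
  have letter: "(drop k w @ [i] @ take k w) ! (length w - k) = i"
    using kw by (simp add: nth_append)
  have pos: "length w - (length w - k) = k" using kw by simp
  have "(\<lambda>(u, s, t). let w = drop (Suc s) u @ take s u
      in ((take t w, drop (Suc t) w), u ! s, w ! t, length w - s)) (cycsplit z)
      = ((take (length p) w, drop (Suc (length p)) w), i, w ! length p, k)"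
    unfolding split Let_def prod.case rot letter pos ..
  then show "(\<lambda>(u, s, t). let w = drop (Suc s) u @ take s u
      in ((take t w, drop (Suc t) w), u ! s, w ! t, length w - s)) (cycsplit z) = z"
    by (simp add: w_def z)
qed

lemma cycsplit_range:
  assumes "k \<le> length p + length r + 1"
  shows "fst (snd (cycsplit ((p, r), i, j, k))) < length (fst (cycsplit ((p, r), i, j, k)))"
    "snd (snd (cycsplit ((p, r), i, j, k))) < length (fst (cycsplit ((p, r), i, j, k))) - 1"
  using assms by (simp_all add: cycsplit_def Let_def)

lemma JD_entry_le:
  fixes g :: "('v::finite) ser"
  assumes a0: "0 \<le> a" and b0: "0 \<le> b"
  shows "cmod (JD (sigmaop g) i j x) * tweight a b x
    \<le> (\<Sum>k\<le>length (fst x) + length (snd x) + 1. cycweight a b g (cycsplit (x, i, j, k)))"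
proof -
  obtain p r where x: "x = (p, r)" by (cases x)
  define w where "w = p @ [j] @ r"
  have "JD (sigmaop g) i j x = (\<Sum>k\<le>length w. sigmaop g (drop k w @ [i] @ take k w))"
    by (simp add: JD_def ncderiv_def cycD_def x w_def)
  then have "cmod (JD (sigmaop g) i j x) * tweight a b x
      \<le> (\<Sum>k\<le>length w. cmod (sigmaop g (drop k w @ [i] @ take k w))) * tweight a b x"
    by (intro mult_right_mono tweight_nonneg[OF a0 b0]) (simp add: norm_sum)
  also have "\<dots> = (\<Sum>k\<le>length w. cycweight a b g (cycsplit (x, i, j, k)))"
    unfolding sum_distrib_right
  proof (intro sum.cong refl)
    fix k assume "k \<in> {..length w}"
    define u where "u = drop k w @ [i] @ take k w"
    have lu: "length u = length p + length r + 2" using \<open>k \<in> _\<close> by (simp add: u_def w_def)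
    have "cycsplit (x, i, j, k) = (u, length w - k, length p)"
      by (simp add: cycsplit_def x u_def w_def)
    moreover have "cmod (sigmaop g u) = cmod (g u) / real (length u)"
    proof -
      have "u \<noteq> []" using lu by auto
      then show ?thesis by (simp add: sigmaop_def norm_divide)
    qed
    ultimately show "cmod (sigmaop g (drop k w @ [i] @ take k w)) * tweight a b x
        = cycweight a b g (cycsplit (x, i, j, k))"
      unfolding u_def[symmetric] using lu by (simp add: cycweight_def x tweight_def)
  qed
  finally show ?thesis by (simp add: x w_def)
qed

text \<open>Summing the contributions of one word u over its |u| positions s cancels the factor
  1/|u| coming from Sigma.\<close>
lemma cycweight_word_sum:
  "(\<Sum>s<length u. \<Sum>t<length u - 1. cycweight a b g (u, s, t))
    = cmod (g u) * (\<Sum>t<length u - 1. a ^ t * b ^ (length u - 2 - t))"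
  by (cases "u = []") (simp_all add: cycweight_def sum_distrib_left mult.assoc)

lemma JD_mnorm_le:
  fixes g :: "('v::finite) ser" and K A :: real
  assumes a0: "0 \<le> a" and b0: "0 \<le> b"
    and dom: "\<And>d. (\<Sum>t<d - 1. a ^ t * b ^ (d - 2 - t)) \<le> K * A ^ d"
    and g: "inCompl A g" and A0: "0 \<le> A" and K0: "0 \<le> K"
  shows "msummable a b (JD (sigmaop g)) \<and> mnorm a b (JD (sigmaop g)) \<le> K * normA A g"
proof (rule mnorm_bounded_sums[OF a0 b0])
  fix F :: "('v list \<times> 'v list) set" assume fF: "finite F"
  define I :: "'v list \<times> 'v list \<Rightarrow> ('v \<times> 'v \<times> nat) set"
    where "I = (\<lambda>x. UNIV \<times> UNIV \<times> {..length (fst x) + length (snd x) + 1})"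
  define D where "D = Sigma F I"
  define U where "U = fst ` cycsplit ` D"
  let ?h = "cycweight a b g"
  have fD: "finite D" unfolding D_def I_def using fF by auto
  have h_nn: "0 \<le> ?h y" for y using a0 b0 by (cases y) (simp add: cycweight_def)
  have "(\<Sum>i\<in>UNIV. \<Sum>j\<in>UNIV. \<Sum>x\<in>F. cmod (JD (sigmaop g) i j x) * tweight a b x)
      = (\<Sum>x\<in>F. \<Sum>i\<in>UNIV. \<Sum>j\<in>UNIV. cmod (JD (sigmaop g) i j x) * tweight a b x)"
    by (subst (2) sum.swap, rule sum.cong[OF refl], rule sum.swap)
  also have "\<dots> \<le> (\<Sum>x\<in>F. \<Sum>(i, j, k)\<in>I x. ?h (cycsplit (x, i, j, k)))"
    unfolding I_def sum.cartesian_product[symmetric]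
    by (intro sum_mono JD_entry_le[OF a0 b0])
  also have "\<dots> = (\<Sum>z\<in>D. ?h (cycsplit z))"
    unfolding D_def using sum.Sigma[of F I "\<lambda>x ijk. ?h (cycsplit (x, ijk))"] fF
    by (simp add: split_def I_def)
  also have "\<dots> = (\<Sum>y\<in>cycsplit ` D. ?h y)"
    using sum.reindex[OF cycsplit_inj, of ?h F] by (simp add: D_def I_def)
  also have "\<dots> \<le> (\<Sum>y\<in>(SIGMA u:U. {..<length u} \<times> {..<length u - 1}). ?h y)"
  proof (rule sum_mono2)
    show "finite (SIGMA u:U. {..<length u} \<times> {..<length u - 1})" using fD by (simp add: U_def)
    show "cycsplit ` D \<subseteq> (SIGMA u:U. {..<length u} \<times> {..<length u - 1})"
    proof
      fix y assume "y \<in> cycsplit ` D"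
      then obtain p r i j k where z: "((p, r), i, j, k) \<in> D" "y = cycsplit ((p, r), i, j, k)"
        by auto
      have "k \<le> length p + length r + 1" using z(1) by (simp add: D_def I_def)
      then have "fst (snd y) < length (fst y)" "snd (snd y) < length (fst y) - 1"
        using cycsplit_range z(2) by simp_all
      moreover have "fst y \<in> U" using \<open>y \<in> cycsplit ` D\<close> by (simp add: U_def)
      ultimately show "y \<in> (SIGMA u:U. {..<length u} \<times> {..<length u - 1})"
        by (cases y) simp
    qed
    show "0 \<le> ?h y" for y by (rule h_nn)
  qed
  also have "\<dots> = (\<Sum>u\<in>U. \<Sum>s<length u. \<Sum>t<length u - 1. ?h (u, s, t))"
    using fD sum.Sigma[of U "\<lambda>u. {..<length u} \<times> {..<length u - 1}" "\<lambda>u st. ?h (u, st)"]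
    by (simp add: U_def sum.cartesian_product split_def)
  also have "\<dots> \<le> (\<Sum>u\<in>U. K * (cmod (g u) * A ^ length u))"
  proof (rule sum_mono)
    fix u :: "'v list"
    have "cmod (g u) * (\<Sum>t<length u - 1. a ^ t * b ^ (length u - 2 - t)) \<le> cmod (g u) * (K * A ^ length u)"
      by (rule mult_left_mono[OF dom]) simp
    then show "(\<Sum>s<length u. \<Sum>t<length u - 1. ?h (u, s, t)) \<le> K * (cmod (g u) * A ^ length u)"
      unfolding cycweight_word_sum by (simp add: mult.left_commute)
  qed
  also have "\<dots> = K * (\<Sum>u\<in>U. cmod (g u) * A ^ length u)" by (simp add: sum_distrib_left)
  also have "\<dots> \<le> K * normA A g"
  proof (rule mult_left_mono[OF _ K0])
    show "(\<Sum>u\<in>U. cmod (g u) * A ^ length u) \<le> normA A g"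
      unfolding normA_def by (rule sum_le_infsum_nonneg) (use g A0 fD in \<open>auto simp: inCompl_def U_def\<close>)
  qed
  finally show "(\<Sum>i\<in>UNIV. \<Sum>j\<in>UNIV. \<Sum>x\<in>F. cmod (JD (sigmaop g) i j x) * tweight a b x)
      \<le> K * normA A g" .
qed

text \<open>For C0 <= A/2 the sums of C0^t A^(d-2-t) (in either order) are at most 2 A^(d-2),
  by comparison with the geometric series of ratio 1/2.\<close>
lemma shifted_geometric_le:
  fixes C0 A :: real
  assumes C00: "0 \<le> C0" and A0: "0 < A" and CA: "C0 \<le> A / 2"
  shows "(\<Sum>t<d - 1. C0 ^ t * A ^ (d - 2 - t)) \<le> 2 / A^2 * A ^ d"
    "(\<Sum>t<d - 1. A ^ t * C0 ^ (d - 2 - t)) \<le> 2 / A^2 * A ^ d"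
proof -
  show bound: "(\<Sum>t<d - 1. C0 ^ t * A ^ (d - 2 - t)) \<le> 2 / A^2 * A ^ d"
  proof (cases "d \<ge> 2")
    case False
    then show ?thesis using A0 by simp
  next
    case True
    have "(\<Sum>t<d - 1. C0 ^ t * A ^ (d - 2 - t)) \<le> (\<Sum>t<d - 1. A ^ (d - 2) * (1/2) ^ t)"
    proof (rule sum_mono)
      fix t assume "t \<in> {..<d - 1}"
      then have t: "t + (d - 2 - t) = d - 2" by auto
      have "C0 ^ t * A ^ (d - 2 - t) \<le> (A / 2) ^ t * A ^ (d - 2 - t)"
        using A0 by (intro mult_right_mono power_mono CA C00) simp
      also have "\<dots> = A ^ (t + (d - 2 - t)) * (1/2) ^ t"
        by (simp add: power_divide power_add)
      finally show "C0 ^ t * A ^ (d - 2 - t) \<le> A ^ (d - 2) * (1/2) ^ t" unfolding t .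
    qed
    also have "\<dots> = A ^ (d - 2) * (2 - 2 * (1/2) ^ (d - 1))"
    proof -
      have geo: "(\<Sum>t<n. (1/2::real) ^ t) = 2 - 2 * (1/2) ^ n" for n by (induction n) auto
      show ?thesis unfolding sum_distrib_left[symmetric] geo ..
    qed
    also have "\<dots> \<le> A ^ (d - 2) * 2" using A0 by (intro mult_left_mono) auto
    also have "\<dots> = 2 / A^2 * A ^ d"
    proof -
      have "d = 2 + (d - 2)" using True by arith
      then have "A ^ d = A ^ 2 * A ^ (d - 2)" by (metis power_add)
      then show ?thesis using A0 by simp
    qed
    finally show ?thesis .
  qed
  have "(\<Sum>t<d - 1. A ^ t * C0 ^ (d - 2 - t)) = (\<Sum>t<d - 1. A ^ (d - 1 - Suc t) * C0 ^ (d - 2 - (d - 1 - Suc t)))"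
    by (rule sum.nat_diff_reindex[symmetric])
  also have "\<dots> = (\<Sum>t<d - 1. C0 ^ t * A ^ (d - 2 - t))"
  proof (rule sum.cong[OF refl])
    fix t assume "t \<in> {..<d - 1}"
    then have "d - 1 - Suc t = d - 2 - t" "d - 2 - (d - 2 - t) = t" by auto
    then show "A ^ (d - 1 - Suc t) * C0 ^ (d - 2 - (d - 1 - Suc t)) = C0 ^ t * A ^ (d - 2 - t)"
      by (simp add: mult.commute)
  qed
  finally show "(\<Sum>t<d - 1. A ^ t * C0 ^ (d - 2 - t)) \<le> 2 / A^2 * A ^ d" using bound by simp
qed

section \<open>Estimate (2): the map (1 (x) tau + tau (x) 1)\<close>

lemma tau_pairing_le:
  fixes tau f :: "'v list \<Rightarrow> complex"
  assumes tau_bd: "\<And>q. cmod (tau q) \<le> C0 ^ length q" and C00: "0 \<le> C0"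
    and f: "(\<lambda>q. cmod (f q) * C0 ^ length q) summable_on UNIV"
  shows "(\<lambda>q. f q * tau q) summable_on UNIV
    \<and> cmod (\<Sum>\<^sub>\<infinity>q. f q * tau q) \<le> (\<Sum>\<^sub>\<infinity>q. cmod (f q) * C0 ^ length q)"
proof -
  have le: "norm (f q * tau q) \<le> cmod (f q) * C0 ^ length q" for q
    using tau_bd[of q] by (simp add: norm_mult mult_left_mono)
  have abs: "(\<lambda>q. norm (f q * tau q)) summable_on UNIV"
    by (rule summable_on_comparison_test[OF f]) (use le in auto)
  have "cmod (\<Sum>\<^sub>\<infinity>q. f q * tau q) \<le> (\<Sum>\<^sub>\<infinity>q. norm (f q * tau q))"
    by (rule norm_infsum_bound[OF abs])
  also have "\<dots> \<le> (\<Sum>\<^sub>\<infinity>q. cmod (f q) * C0 ^ length q)"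
    by (rule infsum_mono[OF abs f]) (rule le)
  finally show ?thesis using abs_summable_summable[OF abs] by simp
qed

lemma tsummable_row:
  fixes T :: "'v ten"
  assumes T: "tsummable A C0 T" and A0: "0 < A"
  shows "(\<lambda>q. cmod (T (w, q)) * C0 ^ length q) summable_on UNIV"
    "A ^ length w * (\<Sum>\<^sub>\<infinity>q. cmod (T (w, q)) * C0 ^ length q)
      = (\<Sum>\<^sub>\<infinity>q. cmod (T (w, q)) * tweight A C0 (w, q))"
proof -
  have row: "(\<lambda>q. cmod (T (w, q)) * tweight A C0 (w, q)) summable_on UNIV"
    using summable_on_slices(1)[OF T[unfolded tsummable_def]] by simp
  show s: "(\<lambda>q. cmod (T (w, q)) * C0 ^ length q) summable_on UNIV"
    using summable_on_cmult_right[OF row, of "1 / A ^ length w"] A0 by (simp add: tweight_def)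
  show "A ^ length w * (\<Sum>\<^sub>\<infinity>q. cmod (T (w, q)) * C0 ^ length q)
      = (\<Sum>\<^sub>\<infinity>q. cmod (T (w, q)) * tweight A C0 (w, q))"
    by (subst infsum_cmult_right[symmetric]) (use s in \<open>auto simp: tweight_def mult_ac\<close>)
qed

lemma tsummable_col:
  fixes T :: "'v ten"
  assumes T: "tsummable C0 A T" and A0: "0 < A"
  shows "(\<lambda>p. cmod (T (p, w)) * C0 ^ length p) summable_on UNIV"
    "A ^ length w * (\<Sum>\<^sub>\<infinity>p. cmod (T (p, w)) * C0 ^ length p)
      = (\<Sum>\<^sub>\<infinity>p. cmod (T (p, w)) * tweight C0 A (p, w))"
proof -
  have col: "(\<lambda>p. cmod (T (p, w)) * tweight C0 A (p, w)) summable_on UNIV"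
    using summable_on_slices(2)[OF T[unfolded tsummable_def]] by simp
  show s: "(\<lambda>p. cmod (T (p, w)) * C0 ^ length p) summable_on UNIV"
    using summable_on_cmult_right[OF col, of "1 / A ^ length w"] A0 by (simp add: tweight_def)
  show "A ^ length w * (\<Sum>\<^sub>\<infinity>p. cmod (T (p, w)) * C0 ^ length p)
      = (\<Sum>\<^sub>\<infinity>p. cmod (T (p, w)) * tweight C0 A (p, w))"
    by (subst infsum_cmult_right[symmetric]) (use s in \<open>auto simp: tweight_def mult_ac\<close>)
qed

context
  fixes tau :: "'v list \<Rightarrow> complex" and C0 A :: real
  assumes tau_bd: "\<And>q. cmod (tau q) \<le> C0 ^ length q" and C00: "0 \<le> C0" and A0: "0 < A"
begin

lemma trmap_normA_le:
  fixes T :: "'v ten"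
  assumes T1: "tsummable A C0 T" and T2: "tsummable C0 A T"
  shows "inCompl A (trmap tau T) \<and> normA A (trmap tau T) \<le> tnorm A C0 T + tnorm C0 A T"
proof -
  have "(\<lambda>w. cmod (trmap tau T w) * A ^ length w) summable_on UNIV \<and>
        (\<Sum>\<^sub>\<infinity>w. cmod (trmap tau T w) * A ^ length w) \<le> tnorm A C0 T + tnorm C0 A T"
  proof (rule summable_on_bounded_sums)
    show "0 \<le> cmod (trmap tau T w) * A ^ length w" for w using A0 by simp
    fix W :: "'v list set" assume fW: "finite W"
    have "cmod (trmap tau T w) * A ^ length w \<le>
        (\<Sum>\<^sub>\<infinity>q. cmod (T (w, q)) * tweight A C0 (w, q)) + (\<Sum>\<^sub>\<infinity>p. cmod (T (p, w)) * tweight C0 A (p, w))"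
      for w
    proof -
      let ?X = "\<Sum>\<^sub>\<infinity>q. cmod (T (w, q)) * C0 ^ length q"
      let ?Y = "\<Sum>\<^sub>\<infinity>p. cmod (T (p, w)) * C0 ^ length p"
      have "cmod (trmap tau T w) \<le> cmod (\<Sum>\<^sub>\<infinity>q. T (w, q) * tau q) + cmod (\<Sum>\<^sub>\<infinity>p. T (p, w) * tau p)"
        unfolding trmap_def by (rule norm_triangle_ineq)
      also have "\<dots> \<le> ?X + ?Y"
        using tau_pairing_le[OF tau_bd C00 tsummable_row(1)[OF T1 A0, of w]]
          tau_pairing_le[OF tau_bd C00 tsummable_col(1)[OF T2 A0, of w]] by simp
      finally have "cmod (trmap tau T w) * A ^ length w \<le> (?X + ?Y) * A ^ length w"
        by (rule mult_right_mono) (use A0 in simp)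
      also have "\<dots> = A ^ length w * ?X + A ^ length w * ?Y" by (simp add: algebra_simps)
      finally show ?thesis unfolding tsummable_row(2)[OF T1 A0] tsummable_col(2)[OF T2 A0] .
    qed
    then have "(\<Sum>w\<in>W. cmod (trmap tau T w) * A ^ length w) \<le>
       (\<Sum>w\<in>W. \<Sum>\<^sub>\<infinity>q. cmod (T (w, q)) * tweight A C0 (w, q))
       + (\<Sum>w\<in>W. \<Sum>\<^sub>\<infinity>p. cmod (T (p, w)) * tweight C0 A (p, w))"
      by (simp add: sum_mono flip: sum.distrib)
    also have "\<dots> \<le> tnorm A C0 T + tnorm C0 A T"
      unfolding tnorm_def
      by (intro add_mono sum_of_slices_le[where F = "\<lambda>x. cmod (T x) * tweight _ _ x", simplified])
         (use T1 T2 fW A0 C00 in \<open>auto simp: tsummable_def tweight_nonneg\<close>)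
    finally show "(\<Sum>w\<in>W. cmod (trmap tau T w) * A ^ length w) \<le> tnorm A C0 T + tnorm C0 A T" .
  qed
  then show ?thesis by (simp add: inCompl_def normA_def)
qed

lemma trmap_linear:
  fixes T :: "'i \<Rightarrow> 'v ten"
  assumes fI: "finite I" and T1: "\<And>i. i \<in> I \<Longrightarrow> tsummable A C0 (T i)"
    and T2: "\<And>i. i \<in> I \<Longrightarrow> tsummable C0 A (T i)"
  shows "trmap tau (\<lambda>x. \<Sum>i\<in>I. c i * T i x) w = (\<Sum>i\<in>I. c i * trmap tau (T i) w)"
proof -
  have row: "(\<lambda>q. T i (w, q) * tau q) summable_on UNIV" "(\<lambda>p. T i (p, w) * tau p) summable_on UNIV"
    if "i \<in> I" for i
    using tau_pairing_le[OF tau_bd C00 tsummable_row(1)[OF T1[OF that] A0]]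
      tau_pairing_le[OF tau_bd C00 tsummable_col(1)[OF T2[OF that] A0]] by auto
  have "(\<Sum>\<^sub>\<infinity>q. (\<Sum>i\<in>I. c i * T i (w, q)) * tau q) = (\<Sum>\<^sub>\<infinity>q. \<Sum>i\<in>I. c i * (T i (w, q) * tau q))"
    by (simp add: sum_distrib_right mult.assoc)
  also have "\<dots> = (\<Sum>i\<in>I. c i * (\<Sum>\<^sub>\<infinity>q. T i (w, q) * tau q))"
    using infsum_finite_sum[OF fI, of "\<lambda>i q. c i * (T i (w, q) * tau q)"] row(1)
    by (simp add: summable_on_cmult_right infsum_cmult_right)
  finally have 1: "(\<Sum>\<^sub>\<infinity>q. (\<Sum>i\<in>I. c i * T i (w, q)) * tau q) = (\<Sum>i\<in>I. c i * (\<Sum>\<^sub>\<infinity>q. T i (w, q) * tau q))" .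
  have "(\<Sum>\<^sub>\<infinity>p. (\<Sum>i\<in>I. c i * T i (p, w)) * tau p) = (\<Sum>\<^sub>\<infinity>p. \<Sum>i\<in>I. c i * (T i (p, w) * tau p))"
    by (simp add: sum_distrib_right mult.assoc)
  also have "\<dots> = (\<Sum>i\<in>I. c i * (\<Sum>\<^sub>\<infinity>p. T i (p, w) * tau p))"
    using infsum_finite_sum[OF fI, of "\<lambda>i p. c i * (T i (p, w) * tau p)"] row(2)
    by (simp add: summable_on_cmult_right infsum_cmult_right)
  finally have 2: "(\<Sum>\<^sub>\<infinity>p. (\<Sum>i\<in>I. c i * T i (p, w)) * tau p) = (\<Sum>i\<in>I. c i * (\<Sum>\<^sub>\<infinity>p. T i (p, w) * tau p))" .
  show ?thesis unfolding trmap_def 1 2 by (simp add: sum.distrib distrib_left)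
qed

end

section \<open>Series in the completion\<close>

lemma normA_nonneg: "0 \<le> A \<Longrightarrow> 0 \<le> normA A P"
  unfolding normA_def by (rule infsum_nonneg) simp

lemma inCompl_scale: "inCompl A P \<Longrightarrow> inCompl A (\<lambda>w. c * P w)"
  unfolding inCompl_def using summable_on_cmult_right[of "\<lambda>w. cmod (P w) * A ^ length w" UNIV "cmod c"]
  by (simp add: norm_mult mult.assoc)

lemma normA_scale: "inCompl A P \<Longrightarrow> normA A (\<lambda>w. c * P w) = cmod c * normA A P"
  unfolding normA_def inCompl_def
  by (subst infsum_cmult_right[symmetric]) (auto simp: norm_mult mult.assoc)

lemma inCompl_diff:
  assumes "inCompl A f" "inCompl A g" "0 \<le> A"
  shows "inCompl A (\<lambda>w. f w - g w)"
  unfolding inCompl_def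
proof (rule summable_on_comparison_test)
  show "(\<lambda>w. cmod (f w) * A ^ length w + cmod (g w) * A ^ length w) summable_on UNIV"
    using assms by (intro summable_on_add) (auto simp: inCompl_def)
  show "cmod (f w - g w) * A ^ length w \<le> cmod (f w) * A ^ length w + cmod (g w) * A ^ length w" for w
    using mult_right_mono[OF norm_triangle_ineq4[of "f w" "g w"], of "A ^ length w"] assms(3)
    by (simp add: algebra_simps)
qed (use assms in simp)

lemma normA_series_le:
  fixes F :: "nat \<Rightarrow> 'v ser"
  assumes A0: "0 < A" and F: "\<And>m. inCompl A (F m)" and B: "\<And>N. (\<Sum>m<N. normA A (F m)) \<le> B"
  shows "(\<forall>w. summable (\<lambda>m. F m w)) \<and> inCompl A (\<lambda>w. \<Sum>m. F m w) \<and> normA A (\<lambda>w. \<Sum>m. F m w) \<le> B"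
proof -
  have coeff: "cmod (F m w) * A ^ length w \<le> normA A (F m)" for m w
    using sum_le_infsum_nonneg[of "\<lambda>w. cmod (F m w) * A ^ length w" "{w}"] F[of m] A0
    by (simp add: inCompl_def normA_def)
  have sA: "summable (\<lambda>m. cmod (F m w) * A ^ length w)" for w
  proof (rule summableI_nonneg_bounded)
    show "0 \<le> cmod (F m w) * A ^ length w" for m using A0 by simp
    show "(\<Sum>m<n. cmod (F m w) * A ^ length w) \<le> B" for n
      using sum_mono[of "{..<n}" "\<lambda>m. cmod (F m w) * A ^ length w" "\<lambda>m. normA A (F m)"] coeff B[of n]
      by force
  qed
  have sn: "summable (\<lambda>m. cmod (F m w))" for w
    using summable_mult2[OF sA[of w], of "1 / A ^ length w"] A0 by simp
  have s: "summable (\<lambda>m. F m w)" for w by (rule summable_norm_cancel) (use sn in simp)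
  have "(\<lambda>w. cmod (\<Sum>m. F m w) * A ^ length w) summable_on UNIV \<and>
       (\<Sum>\<^sub>\<infinity>w. cmod (\<Sum>m. F m w) * A ^ length w) \<le> B"
  proof (rule summable_on_bounded_sums)
    show "0 \<le> cmod (\<Sum>m. F m w) * A ^ length w" for w using A0 by simp
    fix W :: "'v list set" assume fW: "finite W"
    have "(\<Sum>w\<in>W. cmod (\<Sum>m. F m w) * A ^ length w) \<le> (\<Sum>w\<in>W. \<Sum>m. cmod (F m w) * A ^ length w)"
    proof (rule sum_mono)
      fix w
      have "cmod (\<Sum>m. F m w) * A ^ length w \<le> (\<Sum>m. cmod (F m w)) * A ^ length w"
        by (rule mult_right_mono[OF summable_norm]) (use sn A0 in auto)
      also have "\<dots> = (\<Sum>m. cmod (F m w) * A ^ length w)"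
        using suminf_mult2[OF sn[of w], of "A ^ length w"] by simp
      finally show "cmod (\<Sum>m. F m w) * A ^ length w \<le> (\<Sum>m. cmod (F m w) * A ^ length w)" .
    qed
    also have "\<dots> = (\<Sum>m. \<Sum>w\<in>W. cmod (F m w) * A ^ length w)"
      by (rule suminf_sum[symmetric]) (rule sA)
    also have "\<dots> \<le> B"
    proof (rule suminf_le_const)
      show "summable (\<lambda>m. \<Sum>w\<in>W. cmod (F m w) * A ^ length w)" by (rule summable_sum) (rule sA)
      fix n
      have "(\<Sum>m<n. \<Sum>w\<in>W. cmod (F m w) * A ^ length w) \<le> (\<Sum>m<n. normA A (F m))"
      proof (rule sum_mono)
        fix m show "(\<Sum>w\<in>W. cmod (F m w) * A ^ length w) \<le> normA A (F m)"
          unfolding normA_def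
          by (rule sum_le_infsum_nonneg) (use F[of m] A0 fW in \<open>auto simp: inCompl_def\<close>)
      qed
      then show "(\<Sum>m<n. \<Sum>w\<in>W. cmod (F m w) * A ^ length w) \<le> B" using B[of n] by linarith
    qed
    finally show "(\<Sum>w\<in>W. cmod (\<Sum>m. F m w) * A ^ length w) \<le> B" .
  qed
  then show ?thesis using s by (simp add: inCompl_def normA_def)
qed

section \<open>Scalar series\<close>

lemma geometric_tail_le:
  fixes x :: real assumes "0 \<le> x" "x < 1"
  shows "(\<Sum>m<N. x ^ (m + k)) \<le> x ^ k / (1 - x)"
proof -
  have "(\<Sum>m<N. x ^ (m + k)) = x ^ k * (\<Sum>m<N. x ^ m)" by (simp add: power_add sum_distrib_left mult.commute)
  also have "(\<Sum>m<N. x ^ m) = (1 - x ^ N) / (1 - x)" using assms sum_gp_strict[of x N] by simp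
  also have "x ^ k * ((1 - x ^ N) / (1 - x)) \<le> x ^ k * (1 / (1 - x))"
    using assms by (intro mult_left_mono divide_right_mono) auto
  finally show ?thesis by simp
qed

lemma cauchy_product_geometric_le:
  fixes x y :: real
  assumes "0 \<le> x" "x < 1" "0 \<le> y" "y < 1"
  shows "(\<Sum>m<N. \<Sum>j\<le>Suc m. x ^ j * y ^ (Suc m - j)) \<le> 1 / ((1 - y) * (1 - x)) - 1"
proof -
  have geo: "(\<Sum>i<n. z ^ i) \<le> 1 / (1 - z)" if "0 \<le> z" "z < 1" for z :: real and n
  proof -
    have "(\<Sum>i<n. z ^ i) = (1 - z ^ n) / (1 - z)" using that sum_gp_strict[of z n] by simp
    also have "\<dots> \<le> 1 / (1 - z)" using that by (intro divide_right_mono) auto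
    finally show ?thesis .
  qed
  have "(\<Sum>k<Suc N. \<Sum>j\<le>k. x ^ j * y ^ (k - j)) = (\<Sum>(i,j)\<in>{(i,j). i + j < Suc N}. x ^ i * y ^ j)"
    by (rule sum.triangle_reindex[symmetric])
  also have "\<dots> \<le> (\<Sum>(i,j)\<in>{..<Suc N} \<times> {..<Suc N}. x ^ i * y ^ j)"
    by (rule sum_mono2) (use assms in auto)
  also have "\<dots> = (\<Sum>i<Suc N. x ^ i) * (\<Sum>j<Suc N. y ^ j)"
    by (simp only: sum_product sum.cartesian_product)
  also have "\<dots> \<le> (1 / (1 - x)) * (1 / (1 - y))"
    by (intro mult_mono geo sum_nonneg) (use assms in auto)
  finally have "(\<Sum>k<Suc N. \<Sum>j\<le>k. x ^ j * y ^ (k - j)) \<le> 1 / ((1 - y) * (1 - x))"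
    by (simp add: mult.commute)
  moreover have "(\<Sum>k<Suc N. \<Sum>j\<le>k. x ^ j * y ^ (k - j)) = 1 + (\<Sum>m<N. \<Sum>j\<le>Suc m. x ^ j * y ^ (Suc m - j))"
    by (subst sum.lessThan_Suc_shift) simp
  ultimately show ?thesis by simp
qed

lemma trace_minus_logp:
  fixes M :: "('v::finite) mat"
  shows "(\<Sum>i\<in>UNIV. M i i pr - logp M (Suc N) i i pr) =
    (\<Sum>m<N. (-1) ^ m / (of_nat m + 2) * mtrace (mpow M (m + 2)) pr)"
proof -
  have shift: "(\<Sum>m\<in>{1..Suc N}. f m) = f 1 + (\<Sum>m<N. f (Suc (Suc m)))" for f :: "nat \<Rightarrow> complex"
    by (induction N) (auto simp: add.assoc)
  have "M i i pr - logp M (Suc N) i i pr = (\<Sum>m<N. (-1) ^ m / (of_nat m + 2) * mpow M (m + 2) i i pr)" for i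
    unfolding logp_def shift by (simp add: mpow_1 add.commute del: mpow.simps)
  then have "(\<Sum>i\<in>UNIV. M i i pr - logp M (Suc N) i i pr) =
     (\<Sum>i\<in>UNIV. \<Sum>m<N. (-1) ^ m / (of_nat m + 2) * mpow M (m + 2) i i pr)" by simp
  also have "\<dots> = (\<Sum>m<N. (-1) ^ m / (of_nat m + 2) * mtrace (mpow M (m + 2)) pr)"
    by (subst sum.swap) (simp add: mtrace_def sum_distrib_left)
  finally show ?thesis .
qed

lemma JD_sigmaop_diff:
  "JD (sigmaop g) i j x - JD (sigmaop f) i j x = JD (sigmaop (\<lambda>w. g w - f w)) i j x"
  unfolding JD_def ncderiv_def cycD_def sigmaop_def by (simp add: sum_subtractf diff_divide_distrib)

section \<open>The series Q(Sigma g)\<close>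

definition rho :: "real \<Rightarrow> 'v ser \<Rightarrow> real" where
  "rho A h = 2 * normA A h / A^2"

definition Qterm :: "'v ser \<Rightarrow> ('v::finite) ser \<Rightarrow> nat \<Rightarrow> 'v ser" where
  "Qterm tau h m w = (-1) ^ m / (of_nat m + 2) * Qm tau h (m + 2) w"

lemma Qser_Qterm: "Qser tau h w = (\<Sum>m. Qterm tau h m w)"
  by (simp add: Qser_def Qterm_def)

lemma rho_nonneg: "0 \<le> A \<Longrightarrow> 0 \<le> rho A h"
  unfolding rho_def using normA_nonneg[of A h] by simp

lemma rho_less_1: "0 < A \<Longrightarrow> normA A h < A^2 / 2 \<Longrightarrow> rho A h < 1"
  unfolding rho_def by (simp add: field_simps)

lemma rho_diff_commute: "rho A (\<lambda>w. g w - f w) = rho A (\<lambda>w. f w - g w)"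
  unfolding rho_def normA_def by (simp add: norm_minus_commute)

context
  fixes tau :: "('v::finite) list \<Rightarrow> complex" and C0 A :: real
  assumes tau_bd: "\<And>q. cmod (tau q) \<le> C0 ^ length q" and C00: "0 \<le> C0" and A0: "0 < A"
    and CA: "C0 \<le> A / 2"
begin

lemma JD_rho_bound:
  assumes h: "inCompl A h" and ab: "(a = A \<and> b = C0) \<or> (a = C0 \<and> b = A)"
  shows "msummable a b (JD (sigmaop h)) \<and> mnorm a b (JD (sigmaop h)) \<le> rho A h"
  using ab JD_mnorm_le[of A C0 "2 / A^2" A h] JD_mnorm_le[of C0 A "2 / A^2" A h]
    shifted_geometric_le[OF C00 A0 CA] h A0 C00
  by (auto simp: rho_def)

lemma trace_power_rho_bound:
  assumes h: "inCompl A h" and ab: "(a = A \<and> b = C0) \<or> (a = C0 \<and> b = A)"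
  shows "tsummable a b (mtrace (mpow (JD (sigmaop h)) (m + 2)))
    \<and> tnorm a b (mtrace (mpow (JD (sigmaop h)) (m + 2))) \<le> rho A h ^ (m + 2)"
proof -
  have a0: "0 \<le> a" and b0: "0 \<le> b" using ab A0 C00 by auto
  have J: "msummable a b (JD (sigmaop h)) \<and> mnorm a b (JD (sigmaop h)) \<le> rho A h"
    by (rule JD_rho_bound[OF h ab])
  have P: "msummable a b (mpow (JD (sigmaop h)) (Suc (Suc m))) \<and>
      mnorm a b (mpow (JD (sigmaop h)) (Suc (Suc m))) \<le> mnorm a b (JD (sigmaop h)) ^ Suc (Suc m)"
    by (rule mpow_mnorm_le[OF a0 b0]) (use J in simp)
  have "mnorm a b (JD (sigmaop h)) ^ Suc (Suc m) \<le> rho A h ^ Suc (Suc m)"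
    by (rule power_mono) (use J mnorm_nonneg[OF a0 b0] in auto)
  then show ?thesis using mtrace_tnorm_le[OF a0 b0] P by (fastforce simp: numeral_2_eq_2)
qed

text \<open>Combining with estimate (2): the coefficient (-1)^m/(m+2) has modulus at most 1/2,
  which compensates for the two terms in estimate (2).\<close>
lemma scaled_trmap_bound:
  assumes T1: "tsummable A C0 T" and T2: "tsummable C0 A T"
    and b1: "tnorm A C0 T \<le> \<beta>" and b2: "tnorm C0 A T \<le> \<beta>"
  shows "inCompl A (\<lambda>w. (-1) ^ m / (of_nat m + 2) * trmap tau T w)
    \<and> normA A (\<lambda>w. (-1) ^ m / (of_nat m + 2) * trmap tau T w) \<le> \<beta>"
proof -
  have Q: "inCompl A (trmap tau T) \<and> normA A (trmap tau T) \<le> tnorm A C0 T + tnorm C0 A T"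
    by (rule trmap_normA_le[OF tau_bd C00 A0 T1 T2])
  have coeff: "cmod ((-1) ^ m / (of_nat m + 2) :: complex) = 1 / (real m + 2)"
    by (simp add: norm_divide norm_power) (metis of_nat_add of_nat_numeral norm_of_nat)
  have "0 \<le> \<beta>" using b1 tnorm_nonneg[of A C0 T] A0 C00 by linarith
  then have "normA A (\<lambda>w. (-1) ^ m / (of_nat m + 2) * trmap tau T w) \<le> 1 / (real m + 2) * (2 * \<beta>)"
    unfolding normA_scale[OF conjunct1[OF Q]] coeff using Q b1 b2 by (intro mult_left_mono) auto
  also have "\<dots> \<le> \<beta>" using \<open>0 \<le> \<beta>\<close> by (simp add: field_simps)
  finally show ?thesis using inCompl_scale[OF conjunct1[OF Q]] by blast
qed

lemma Qterm_rho_bound: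
  assumes h: "inCompl A h"
  shows "inCompl A (Qterm tau h m) \<and> normA A (Qterm tau h m) \<le> rho A h ^ (m + 2)"
proof -
  let ?T = "mtrace (mpow (JD (sigmaop h)) (m + 2))"
  have "Qterm tau h m = (\<lambda>w. (-1) ^ m / (of_nat m + 2) * trmap tau ?T w)"
    by (rule ext) (simp add: Qterm_def Qm_def)
  moreover have "inCompl A (\<lambda>w. (-1) ^ m / (of_nat m + 2) * trmap tau ?T w)
      \<and> normA A (\<lambda>w. (-1) ^ m / (of_nat m + 2) * trmap tau ?T w) \<le> rho A h ^ (m + 2)"
    by (rule scaled_trmap_bound) (use trace_power_rho_bound[OF h] in auto)
  ultimately show ?thesis by simp
qed

lemma Qterm_tail_bound:
  assumes h: "inCompl A h" and small: "normA A h < A^2 / 2"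
  shows "(\<forall>w. summable (\<lambda>m. Qterm tau h (m + k) w))
    \<and> inCompl A (\<lambda>w. \<Sum>m. Qterm tau h (m + k) w)
    \<and> normA A (\<lambda>w. \<Sum>m. Qterm tau h (m + k) w) \<le> rho A h ^ (k + 2) / (1 - rho A h)"
proof (rule normA_series_le[OF A0])
  show "inCompl A (Qterm tau h (m + k))" for m using Qterm_rho_bound[OF h] by blast
  fix N
  have "(\<Sum>m<N. normA A (Qterm tau h (m + k))) \<le> (\<Sum>m<N. rho A h ^ (m + (k + 2)))"
    by (intro sum_mono) (use Qterm_rho_bound[OF h] in \<open>simp add: add.assoc\<close>)
  also have "\<dots> \<le> rho A h ^ (k + 2) / (1 - rho A h)"
    by (rule geometric_tail_le) (use rho_nonneg[OF less_imp_le[OF A0]] rho_less_1[OF A0 small] in auto)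
  finally show "(\<Sum>m<N. normA A (Qterm tau h (m + k))) \<le> rho A h ^ (k + 2) / (1 - rho A h)" .
qed

lemma Qser_bound:
  assumes "inCompl A h" and "normA A h < A^2 / 2"
  shows "(\<forall>w. summable (\<lambda>m. Qterm tau h m w)) \<and> inCompl A (Qser tau h)
    \<and> normA A (Qser tau h) \<le> rho A h ^ 2 / (1 - rho A h)"
  using Qterm_tail_bound[OF assms, of 0] by (simp add: Qser_Qterm[abs_def] power2_eq_square)

lemma Qser_partial_sums:
  assumes g: "inCompl A g" and small: "normA A g < A^2 / 2"
  shows "(\<lambda>N. normA A (\<lambda>w. (\<Sum>m<N. Qterm tau g m w) - Qser tau g w)) \<longlonglongrightarrow> 0"
proof (rule tendsto_sandwich[of "\<lambda>_. 0" _ sequentially "\<lambda>N. rho A g ^ 2 / (1 - rho A g) * rho A g ^ N"])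
  have tail: "(\<Sum>m<N. Qterm tau g m w) - Qser tau g w = - (\<Sum>m. Qterm tau g (m + N) w)" for N w
    using suminf_split_initial_segment[of "\<lambda>m. Qterm tau g m w" N] Qser_bound[OF g small]
    by (simp add: Qser_Qterm)
  show "\<forall>\<^sub>F N in sequentially. normA A (\<lambda>w. (\<Sum>m<N. Qterm tau g m w) - Qser tau g w)
      \<le> rho A g ^ 2 / (1 - rho A g) * rho A g ^ N"
  proof (rule always_eventually, rule allI)
    fix N
    have "normA A (\<lambda>w. (\<Sum>m<N. Qterm tau g m w) - Qser tau g w)
        = normA A (\<lambda>w. \<Sum>m. Qterm tau g (m + N) w)"
      by (simp add: tail normA_def)
    also have "\<dots> \<le> rho A g ^ (N + 2) / (1 - rho A g)"
      using Qterm_tail_bound[OF g small, of N] by blast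
    also have "\<dots> = rho A g ^ 2 / (1 - rho A g) * rho A g ^ N"
      by (simp add: power_add mult.commute power2_eq_square)
    finally show "normA A (\<lambda>w. (\<Sum>m<N. Qterm tau g m w) - Qser tau g w)
        \<le> rho A g ^ 2 / (1 - rho A g) * rho A g ^ N" .
  qed
  show "(\<lambda>N. rho A g ^ 2 / (1 - rho A g) * rho A g ^ N) \<longlonglongrightarrow> 0"
    by (intro tendsto_mult_right_zero LIMSEQ_power_zero)
       (use rho_nonneg[OF less_imp_le[OF A0], of g] rho_less_1[OF A0 small] in simp)
  show "\<forall>\<^sub>F N in sequentially. 0 \<le> normA A (\<lambda>w. (\<Sum>m<N. Qterm tau g m w) - Qser tau g w)"
    by (intro always_eventually allI normA_nonneg) (use A0 in simp)
qed simp

lemma trmap_log_partial_sum: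
  assumes g: "inCompl A g"
  shows "trmap tau (\<lambda>pr. \<Sum>i\<in>UNIV. JD (sigmaop g) i i pr - logp (JD (sigmaop g)) (Suc N) i i pr) w
    = (\<Sum>m<N. Qterm tau g m w)"
proof -
  let ?T = "\<lambda>m. mtrace (mpow (JD (sigmaop g)) (m + 2))"
  have "trmap tau (\<lambda>pr. \<Sum>i\<in>UNIV. JD (sigmaop g) i i pr - logp (JD (sigmaop g)) (Suc N) i i pr) w
      = trmap tau (\<lambda>pr. \<Sum>m<N. (-1) ^ m / (of_nat m + 2) * ?T m pr) w"
    by (simp only: trace_minus_logp)
  also have "\<dots> = (\<Sum>m<N. (-1) ^ m / (of_nat m + 2) * trmap tau (?T m) w)"
    by (rule trmap_linear[OF tau_bd C00 A0]) (use trace_power_rho_bound[OF g] in auto)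
  finally show ?thesis by (simp add: Qterm_def Qm_def)
qed

lemma Qser_log_formula:
  assumes g: "inCompl A g" and small: "normA A g < A^2 / 2"
  shows "(\<lambda>N. normA A (\<lambda>w. trmap tau (\<lambda>pr. \<Sum>i\<in>UNIV. JD (sigmaop g) i i pr
      - logp (JD (sigmaop g)) N i i pr) w - Qser tau g w)) \<longlonglongrightarrow> 0"
proof (rule LIMSEQ_imp_Suc)
  show "(\<lambda>N. normA A (\<lambda>w. trmap tau (\<lambda>pr. \<Sum>i\<in>UNIV. JD (sigmaop g) i i pr
      - logp (JD (sigmaop g)) (Suc N) i i pr) w - Qser tau g w)) \<longlonglongrightarrow> 0"
    using Qser_partial_sums[OF g small] by (simp only: trmap_log_partial_sum[OF g])
qed

lemma Qterm_diff_bound: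
  assumes g: "inCompl A g" and f: "inCompl A f"
  shows "inCompl A (\<lambda>w. Qterm tau g m w - Qterm tau f m w)
    \<and> normA A (\<lambda>w. Qterm tau g m w - Qterm tau f m w)
      \<le> rho A (\<lambda>w. g w - f w) * (\<Sum>j\<le>Suc m. rho A g ^ j * rho A f ^ (Suc m - j))"
proof -
  let ?J = "\<lambda>h. JD (sigmaop h)"
  let ?U = "mtrace (mdiff (mpow (?J g) (m + 2)) (mpow (?J f) (m + 2)))"
  let ?\<beta> = "rho A (\<lambda>w. g w - f w) * (\<Sum>j\<le>Suc m. rho A g ^ j * rho A f ^ (Suc m - j))"
  have gf: "inCompl A (\<lambda>w. g w - f w)" by (rule inCompl_diff) (use g f A0 in auto)
  have J_diff: "mdiff (?J g) (?J f) = ?J (\<lambda>w. g w - f w)"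
    unfolding mdiff_def by (intro ext) (rule JD_sigmaop_diff)
  have U: "tsummable a b ?U \<and> tnorm a b ?U \<le> ?\<beta>" if ab: "(a = A \<and> b = C0) \<or> (a = C0 \<and> b = A)" for a b
  proof -
    have a0: "0 \<le> a" and b0: "0 \<le> b" using ab A0 C00 by auto
    have "msummable a b (mdiff (mpow (?J g) (Suc (Suc m))) (mpow (?J f) (Suc (Suc m))))
      \<and> mnorm a b (mdiff (mpow (?J g) (Suc (Suc m))) (mpow (?J f) (Suc (Suc m)))) \<le> ?\<beta>"
      by (rule mpow_diff_mnorm_le[OF a0 b0])
         (use JD_rho_bound[OF g ab] JD_rho_bound[OF f ab] JD_rho_bound[OF gf ab] J_diff in auto)
    then show ?thesis using mtrace_tnorm_le[OF a0 b0] by (fastforce simp: numeral_2_eq_2)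
  qed
  have "Qterm tau g m w - Qterm tau f m w = (-1) ^ m / (of_nat m + 2) * trmap tau ?U w" for w
  proof -
    let ?Tg = "mtrace (mpow (?J g) (m + 2))" and ?Tf = "mtrace (mpow (?J f) (m + 2))"
    have "trmap tau (\<lambda>x. \<Sum>i\<in>{True, False}. (if i then 1 else -1) * (if i then ?Tg else ?Tf) x) w
        = (\<Sum>i\<in>{True, False}. (if i then 1 else -1) * trmap tau (if i then ?Tg else ?Tf) w)"
      by (rule trmap_linear[OF tau_bd C00 A0])
         (use trace_power_rho_bound[OF g] trace_power_rho_bound[OF f] in auto)
    moreover have "(\<lambda>x. ?Tg x - ?Tf x) = ?U"
      unfolding mtrace_def mdiff_def by (simp add: sum_subtractf)
    ultimately show ?thesis by (simp add: Qterm_def Qm_def right_diff_distrib)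
  qed
  then show ?thesis using scaled_trmap_bound[of ?U ?\<beta> m] U by simp
qed

lemma Qser_lipschitz:
  assumes g: "inCompl A g" "normA A g < A^2 / 2" and f: "inCompl A f" "normA A f < A^2 / 2"
  shows "normA A (\<lambda>w. Qser tau g w - Qser tau f w)
    \<le> rho A (\<lambda>w. f w - g w) * (1 / ((1 - rho A f) * (1 - rho A g)) - 1)"
proof -
  let ?D = "\<lambda>m w. Qterm tau g m w - Qterm tau f m w"
  have "(\<forall>w. summable (\<lambda>m. ?D m w)) \<and> inCompl A (\<lambda>w. \<Sum>m. ?D m w)
      \<and> normA A (\<lambda>w. \<Sum>m. ?D m w) \<le> rho A (\<lambda>w. f w - g w) * (1 / ((1 - rho A f) * (1 - rho A g)) - 1)"
  proof (rule normA_series_le[OF A0])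
    show "inCompl A (?D m)" for m using Qterm_diff_bound[OF g(1) f(1)] by blast
    fix N
    have "(\<Sum>m<N. normA A (?D m))
        \<le> (\<Sum>m<N. rho A (\<lambda>w. f w - g w) * (\<Sum>j\<le>Suc m. rho A g ^ j * rho A f ^ (Suc m - j)))"
      by (intro sum_mono) (use Qterm_diff_bound[OF g(1) f(1)] rho_diff_commute in metis)
    also have "\<dots> \<le> rho A (\<lambda>w. f w - g w) * (1 / ((1 - rho A f) * (1 - rho A g)) - 1)"
      unfolding sum_distrib_left[symmetric]
      by (intro mult_left_mono cauchy_product_geometric_le rho_nonneg[OF less_imp_le[OF A0]])
         (use rho_less_1[OF A0 g(2)] rho_less_1[OF A0 f(2)] A0 in auto)
    finally show "(\<Sum>m<N. normA A (?D m))
        \<le> rho A (\<lambda>w. f w - g w) * (1 / ((1 - rho A f) * (1 - rho A g)) - 1)" .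
  qed
  moreover have "Qser tau g w - Qser tau f w = (\<Sum>m. ?D m w)" for w
  proof -
    have "summable (\<lambda>m. Qterm tau g m w)" "summable (\<lambda>m. Qterm tau f m w)"
      using Qser_bound[OF g] Qser_bound[OF f] by blast+
    then show ?thesis by (simp add: Qser_Qterm suminf_diff)
  qed
  ultimately show ?thesis by simp
qed

end

theorem mainTheorem10:
  fixes tau :: "('v::finite) list \<Rightarrow> complex" and C0 A :: real and g :: "'v list \<Rightarrow> complex"
  assumes tau_bd: "\<And>q. cmod (tau q) \<le> C0 ^ length q"
    and A_gt: "A > 1" and C0A: "C0 / A < 1/2"
    and g_in: "inCompl A g" and g0: "g [] = 0" and g_small: "normA A g < A^2 / 2"
  shows "inCompl A (Qser tau g)
     \<and> (\<lambda>N. normA A (\<lambda>w. (\<Sum>m<N. (-1) ^ m / (of_nat m + 2) * Qm tau g (m + 2) w)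
                          - Qser tau g w)) \<longlonglongrightarrow> 0
     \<and> (\<lambda>N. normA A (\<lambda>w. trmap tau (\<lambda>pr. \<Sum>i\<in>UNIV. JD (sigmaop g) i i pr
                                   - logp (JD (sigmaop g)) N i i pr) w
                          - Qser tau g w)) \<longlonglongrightarrow> 0
     \<and> (\<forall>f. inCompl A f \<and> f [] = 0 \<and> normA A f < A^2 / 2 \<longrightarrow>
          normA A (\<lambda>w. Qser tau g w - Qser tau f w)
            \<le> normA A (\<lambda>w. f w - g w) * (2 / A^2) *
               (1 / ((1 - 2 * normA A f / A^2) * (1 - 2 * normA A g / A^2)) - 1))
     \<and> normA A (Qser tau g) \<le> (2 * normA A g / A^2)^2 / (1 - 2 * normA A g / A^2)"
proof -
  have A0: "0 < A" using A_gt by simp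
  have "cmod (tau [undefined]) \<le> C0" using tau_bd[of "[undefined]"] by simp
  then have C00: "0 \<le> C0" by (meson norm_ge_zero order_trans)
  have CA: "C0 \<le> A / 2" using C0A A0 by (simp add: field_simps)
  note hyps = tau_bd C00 A0 CA
  have bound: "inCompl A (Qser tau g) \<and> normA A (Qser tau g) \<le> rho A g ^ 2 / (1 - rho A g)"
    using Qser_bound[OF hyps g_in g_small] by blast
  have lipschitz: "normA A (\<lambda>w. Qser tau g w - Qser tau f w)
      \<le> normA A (\<lambda>w. f w - g w) * (2 / A^2) * (1 / ((1 - rho A f) * (1 - rho A g)) - 1)"
    if "inCompl A f" "normA A f < A^2 / 2" for f
    using Qser_lipschitz[OF hyps g_in g_small that] by (simp add: rho_def mult_ac)
  show ?thesis
    using bound lipschitz Qser_partial_sums[OF hyps g_in g_small] Qser_log_formula[OF hyps g_in g_small]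
    by (simp add: rho_def Qterm_def)
qed

end
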